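(* Let $\mathcal J$ be an input complex (such as $\mathcal P_n(\mathcal I)$), $\mathcal O$ an output complex and $\Gamma:\mathcal J\to 2^{\mathcal O}$ a carrier map that is non-expanding, i.e. every simplex of $\Gamma(\sigma)$ has dimension at most $\dim\sigma$. Then for any $\mathcal A\subseteq\mathcal J\times IIS_n$, the task $(\mathcal J,\mathcal O,\Gamma)$ is solvable on $\mathcal A$ if and only if there exists $P\in CP$ such that $(\mathcal J,\mathcal O,\Gamma_P)$ is solvable on $\mathcal A$.
   Context: Fix $n\ge 0$, processes $\Pi_n=\{0,\dots,n\}$. $ImS_n$ is the set of directed graphs $G$ on $\Pi_n$ containing all self-loops such that in-neighbourhoods $In_G(a)=\{b:(b,a)\in A(G)\}$ are totally ordered by inclusion and $(a,b),(b,c)\in A(G)\Rightarrow(a,c)\in A(G)$; $IIS_n=ImS_n^\omega$. In an execution $\iota.w$, $w=G_1G_2\cdots$, processes start with inputs from the initial configuration $\iota$ (a simplex of the chromatic input complex $\mathcal J$), and in round $r$ process $q$ receives the state of $p$ iff $(p,q)\in A(G_r)$, then updates its state. For a carrier map $\Gamma:\mathcal J\to2^{\mathcal O}$ (monotone), the task $(\mathcal J,\mathcal O,\Gamma)$ is solvable on $\mathcal A\subseteq\mathcal J\times IIS_n$ if some algorithm makes, in every $\iota.w\in\mathcal A$, each process of $\iota$ decide a vertex of $\mathcal O$ after finitely many rounds with the decided set a simplex of $\Gamma(\iota)$. For non-expanding $\Gamma$, $\Gamma(v)$ is a set of vertices of $\mathcal O$ for each vertex $v$ of $\mathcal J$.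 $CP$ is the set of collections $P$ of pairs $(v,u)$ with $u\in\Gamma(v)$ in which every vertex $v$ of $\mathcal J$ appears exactly once. For $P\in CP$, $\Gamma_P(v)=\{u\}$ for $(v,u)\in P$, and $\Gamma_P(\sigma)=\Gamma(\sigma)$ for every simplex $\sigma$ of dimension $\ge1$. *)

theory Defs
  imports Main
begin

text \<open>Vertices are pairs (process, value); the colour of a vertex is its first component.
  A complex is represented by its set of (nonempty, finite) simplices.\<close>

definition simplicial_complex :: "'v set set \<Rightarrow> bool" where
  "simplicial_complex K \<longleftrightarrow>
     (\<forall>\<sigma>\<in>K. finite \<sigma> \<and> \<sigma> \<noteq> {}) \<and>
     (\<forall>\<sigma>\<in>K. \<forall>\<tau>. \<tau> \<subseteq> \<sigma> \<and> \<tau> \<noteq> {} \<longrightarrow> \<tau> \<in> K)"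

definition chromatic_complex :: "nat \<Rightarrow> (nat \<times> 'a) set set \<Rightarrow> bool" where
  "chromatic_complex n K \<longleftrightarrow> simplicial_complex K \<and>
     (\<forall>\<sigma>\<in>K. inj_on fst \<sigma> \<and> fst ` \<sigma> \<subseteq> {0..n})"

definition carrier_map :: "'v set set \<Rightarrow> 'w set set \<Rightarrow> ('v set \<Rightarrow> 'w set set) \<Rightarrow> bool" where
  "carrier_map J Out \<Gamma> \<longleftrightarrow>
     (\<forall>\<sigma>\<in>J. \<Gamma> \<sigma> \<subseteq> Out \<and> \<Gamma> \<sigma> \<noteq> {} \<and>
        (\<forall>\<tau>\<in>\<Gamma> \<sigma>. \<forall>\<rho>. \<rho> \<subseteq> \<tau> \<and> \<rho> \<noteq> {} \<longrightarrow> \<rho> \<in> \<Gamma> \<sigma>)) \<and>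
     (\<forall>\<sigma>\<in>J. \<forall>\<tau>\<in>J. \<sigma> \<subseteq> \<tau> \<longrightarrow> \<Gamma> \<sigma> \<subseteq> \<Gamma> \<tau>)"

definition non_expanding :: "'v set set \<Rightarrow> ('v set \<Rightarrow> 'w set set) \<Rightarrow> bool" where
  "non_expanding J \<Gamma> \<longleftrightarrow> (\<forall>\<sigma>\<in>J. \<forall>\<tau>\<in>\<Gamma> \<sigma>. card \<tau> - 1 \<le> card \<sigma> - 1)"

definition In_nbh :: "(nat \<times> nat) set \<Rightarrow> nat \<Rightarrow> nat set" where
  "In_nbh G a = {b. (b, a) \<in> G}"

definition ImS :: "nat \<Rightarrow> (nat \<times> nat) set set" where
  "ImS n = {G. G \<subseteq> {0..n} \<times> {0..n} \<and>
              (\<forall>a\<in>{0..n}. (a, a) \<in> G) \<and>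
              (\<forall>a\<in>{0..n}. \<forall>b\<in>{0..n}. In_nbh G a \<subseteq> In_nbh G b \<or> In_nbh G b \<subseteq> In_nbh G a) \<and>
              (\<forall>a b c. (a, b) \<in> G \<and> (b, c) \<in> G \<longrightarrow> (a, c) \<in> G)}"

text \<open>An infinite word \<open>G_1 G_2 \<dots>\<close> is a function \<open>w\<close> with \<open>w r = G_(r+1)\<close>.\<close>

definition IIS :: "nat \<Rightarrow> (nat \<Rightarrow> (nat \<times> nat) set) set" where
  "IIS n = {w. \<forall>r. w r \<in> ImS n}"

datatype 'v st = Init 'v | Rd "nat \<Rightarrow> 'v st option"

text \<open>Full-information state of process q after r rounds of execution \<open>\<iota>.w\<close>.\<close>

primrec view :: "(nat \<times> 'a) set \<Rightarrow> (nat \<Rightarrow> (nat \<times> nat) set) \<Rightarrow> nat \<Rightarrow> nat \<Rightarrow> (nat \<times> 'a) st" where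
  "view \<iota> w 0 q = Init (THE v. v \<in> \<iota> \<and> fst v = q)"
| "view \<iota> w (Suc r) q =
     Rd (\<lambda>p. if p \<in> fst ` \<iota> \<and> (p, q) \<in> w r then Some (view \<iota> w r p) else None)"

text \<open>An algorithm is (w.l.o.g.) a full-information protocol together with a decision map
  \<open>\<delta>\<close> on local states; a process decides at the first round in which \<open>\<delta>\<close> of its state is defined.\<close>

definition decision :: "((nat \<times> 'a) st \<Rightarrow> 'w option) \<Rightarrow> (nat \<times> 'a) set \<Rightarrow>
    (nat \<Rightarrow> (nat \<times> nat) set) \<Rightarrow> nat \<Rightarrow> 'w" where
  "decision \<delta> \<iota> w q = the (\<delta> (view \<iota> w (LEAST r. \<delta> (view \<iota> w r q) \<noteq> None) q))"

definition solves_on :: "(nat \<times> 'a) set set \<Rightarrow> 'w set set \<Rightarrow> ((nat \<times> 'a) set \<Rightarrow> 'w set set) \<Rightarrow>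
    ((nat \<times> 'a) set \<times> (nat \<Rightarrow> (nat \<times> nat) set)) set \<Rightarrow> ((nat \<times> 'a) st \<Rightarrow> 'w option) \<Rightarrow> bool" where
  "solves_on J Out \<Gamma> A \<delta> \<longleftrightarrow>
     (\<forall>(\<iota>, w)\<in>A.
        (\<forall>q\<in>fst ` \<iota>. (\<exists>r. \<delta> (view \<iota> w r q) \<noteq> None) \<and> {decision \<delta> \<iota> w q} \<in> Out) \<and>
        decision \<delta> \<iota> w ` (fst ` \<iota>) \<in> \<Gamma> \<iota>)"

definition solvable_on :: "(nat \<times> 'a) set set \<Rightarrow> 'w set set \<Rightarrow> ((nat \<times> 'a) set \<Rightarrow> 'w set set) \<Rightarrow>
    ((nat \<times> 'a) set \<times> (nat \<Rightarrow> (nat \<times> nat) set)) set \<Rightarrow> bool" where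
  "solvable_on J Out \<Gamma> A \<longleftrightarrow> (\<exists>\<delta>. solves_on J Out \<Gamma> A \<delta>)"

text \<open>\<open>Gamma(v)\<close> for a vertex v is the set of vertices u with \<open>{u} \<in> \<Gamma> {v}\<close>.\<close>

definition CP :: "'v set set \<Rightarrow> ('v set \<Rightarrow> 'w set set) \<Rightarrow> ('v \<times> 'w) set set" where
  "CP J \<Gamma> = {P. (\<forall>(v, u)\<in>P. {v} \<in> J \<and> {u} \<in> \<Gamma> {v}) \<and>
                  (\<forall>v. {v} \<in> J \<longrightarrow> (\<exists>!u. (v, u) \<in> P))}"

definition Gamma_P :: "('v set \<Rightarrow> 'w set set) \<Rightarrow> ('v \<times> 'w) set \<Rightarrow> 'v set \<Rightarrow> 'w set set" where
  "Gamma_P \<Gamma> P \<sigma> = (if card \<sigma> = 1 then {{u} | u. (the_elem \<sigma>, u) \<in> P} else \<Gamma> \<sigma>)"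

end

theory Submission
  imports Defs
begin

text \<open>Every round graph contains the self-loop of each process, so a process running solo
  receives only its own previous state: its view, hence its decision, depends on its input
  vertex alone and not on the communication word. Recording these solo decisions as the
  choice \<open>P\<close> turns any algorithm for \<open>\<Gamma>\<close> into one for \<open>\<Gamma>\<^sub>P\<close>, which it
  solves unchanged. Conversely \<open>\<Gamma>\<^sub>P \<subseteq> \<Gamma>\<close>, so an algorithm for \<open>\<Gamma>\<^sub>P\<close> solves \<open>\<Gamma>\<close>.\<close>

lemma view_solo_eq:
  assumes "w \<in> IIS n" "w' \<in> IIS n" "fst v \<le> n"
  shows "view {v} w r (fst v) = view {v} w' r (fst v)"
proof (induction r)
  case 0
  then show ?case by simp
next
  case (Suc r)
  have "(fst v, fst v) \<in> w r" "(fst v, fst v) \<in> w' r"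
    using assms unfolding IIS_def ImS_def by auto
  with Suc show ?case by (simp add: fun_eq_iff)
qed

lemma decision_solo_eq:
  assumes "w \<in> IIS n" "w' \<in> IIS n" "fst v \<le> n"
  shows "decision \<delta> {v} w (fst v) = decision \<delta> {v} w' (fst v)"
  unfolding decision_def using view_solo_eq[OF assms] by simp

lemma solves_on_carrier_transfer:
  assumes "solves_on J Out \<Gamma> A \<delta>"
    and "\<And>\<iota> w. (\<iota>, w) \<in> A \<Longrightarrow> decision \<delta> \<iota> w ` fst ` \<iota> \<in> \<Gamma> \<iota> \<Longrightarrow>
           decision \<delta> \<iota> w ` fst ` \<iota> \<in> \<Gamma>' \<iota>"
  shows "solves_on J Out \<Gamma>' A \<delta>"
  using assms unfolding solves_on_def by blast

lemma decision_solo_in_carrier: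
  assumes "solves_on J Out \<Gamma> A \<delta>" "({v}, w) \<in> A"
  shows "{decision \<delta> {v} w (fst v)} \<in> \<Gamma> {v}"
  using assms unfolding solves_on_def by fastforce

lemma carrier_map_vertex_exists:
  assumes "carrier_map J Out \<Gamma>" "simplicial_complex Out" "\<sigma> \<in> J"
  shows "\<exists>u. {u} \<in> \<Gamma> \<sigma>"
proof -
  have carrier: "\<Gamma> \<sigma> \<subseteq> Out \<and> \<Gamma> \<sigma> \<noteq> {} \<and>
      (\<forall>\<tau>\<in>\<Gamma> \<sigma>. \<forall>\<rho>. \<rho> \<subseteq> \<tau> \<and> \<rho> \<noteq> {} \<longrightarrow> \<rho> \<in> \<Gamma> \<sigma>)"
    using bspec[OF conjunct1[OF assms(1)[unfolded carrier_map_def]] assms(3)] .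
  then obtain \<tau> where \<tau>: "\<tau> \<in> \<Gamma> \<sigma>" by blast
  have "\<tau> \<in> Out"
    using \<tau> carrier by blast
  then have "\<tau> \<noteq> {}"
    using conjunct1[OF assms(2)[unfolded simplicial_complex_def]] by blast
  then obtain u where "u \<in> \<tau>" by blast
  then have "{u} \<in> \<Gamma> \<sigma>"
    using \<tau> carrier by blast
  then show ?thesis ..
qed

lemma graph_in_CP:
  assumes "\<And>v. {v} \<in> J \<Longrightarrow> {f v} \<in> \<Gamma> {v}"
  shows "{(v, f v) | v. {v} \<in> J} \<in> CP J \<Gamma>"
  using assms unfolding CP_def by blast

lemma Gamma_P_subset:
  assumes "P \<in> CP J \<Gamma>"
  shows "Gamma_P \<Gamma> P \<sigma> \<subseteq> \<Gamma> \<sigma>"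
proof (cases "card \<sigma> = 1")
  case True
  then obtain v where "\<sigma> = {v}" by (auto simp: card_Suc_eq)
  with assms show ?thesis unfolding Gamma_P_def CP_def by auto
qed (simp add: Gamma_P_def)

lemma solves_on_Gamma_P:
  assumes "solves_on J Out \<Gamma> A \<delta>"
    and "\<And>v w. ({v}, w) \<in> A \<Longrightarrow> (v, decision \<delta> {v} w (fst v)) \<in> P"
  shows "solves_on J Out (Gamma_P \<Gamma> P) A \<delta>"
  using assms(1)
proof (rule solves_on_carrier_transfer)
  fix \<iota> w
  assume "(\<iota>, w) \<in> A" "decision \<delta> \<iota> w ` fst ` \<iota> \<in> \<Gamma> \<iota>"
  then show "decision \<delta> \<iota> w ` fst ` \<iota> \<in> Gamma_P \<Gamma> P \<iota>"
    using assms(2) by (cases "card \<iota> = 1") (auto simp: Gamma_P_def card_Suc_eq)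
qed

lemma exists_CP_extending_solo_decisions:
  assumes "chromatic_complex n J" "simplicial_complex Out" "carrier_map J Out \<Gamma>"
    and "A \<subseteq> J \<times> IIS n" "solves_on J Out \<Gamma> A \<delta>"
  shows "\<exists>P\<in>CP J \<Gamma>. \<forall>v w. ({v}, w) \<in> A \<longrightarrow> (v, decision \<delta> {v} w (fst v)) \<in> P"
proof -
  define f where "f v = (if \<exists>w. ({v}, w) \<in> A
      then decision \<delta> {v} (SOME w. ({v}, w) \<in> A) (fst v) else (SOME u. {u} \<in> \<Gamma> {v}))" for v
  have f_solo: "f v = decision \<delta> {v} w (fst v)" if solo: "({v}, w) \<in> A" for v w
  proof -
    define w' where "w' = (SOME w. ({v}, w) \<in> A)"
    have "({v}, w') \<in> A"
      unfolding w'_def using solo by (rule someI[where P = "\<lambda>w. ({v}, w) \<in> A"])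
    then have "w' \<in> IIS n"
      using assms(4) by auto
    have "w \<in> IIS n" "{v} \<in> J"
      using solo assms(4) by auto
    then have "fst v \<le> n"
      using assms(1) unfolding chromatic_complex_def by auto
    with \<open>w' \<in> IIS n\<close> \<open>w \<in> IIS n\<close>
    have "decision \<delta> {v} w' (fst v) = decision \<delta> {v} w (fst v)"
      by (rule decision_solo_eq)
    with solo show ?thesis
      unfolding f_def w'_def by auto
  qed
  have "{f v} \<in> \<Gamma> {v}" if "{v} \<in> J" for v
  proof (cases "\<exists>w. ({v}, w) \<in> A")
    case True
    then obtain w where "({v}, w) \<in> A" ..
    then show ?thesis
      using f_solo decision_solo_in_carrier[OF assms(5)] by simp
  next
    case False
    have "\<exists>u. {u} \<in> \<Gamma> {v}"
      using assms(3,2) that by (rule carrier_map_vertex_exists)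
    then have "{SOME u. {u} \<in> \<Gamma> {v}} \<in> \<Gamma> {v}"
      by (rule someI_ex)
    with False show ?thesis
      unfolding f_def by simp
  qed
  then have "{(v, f v) | v. {v} \<in> J} \<in> CP J \<Gamma>"
    by (rule graph_in_CP)
  moreover have "(v, decision \<delta> {v} w (fst v)) \<in> {(v, f v) | v. {v} \<in> J}"
    if "({v}, w) \<in> A" for v w
  proof -
    have "{v} \<in> J"
      using that assms(4) by auto
    then show ?thesis
      using f_solo[OF that] by force
  qed
  ultimately show ?thesis by blast
qed

theorem mainTheorem9:
  fixes n :: nat
    and J :: "(nat \<times> 'a) set set"
    and Out :: "(nat \<times> 'b) set set"
    and \<Gamma> :: "(nat \<times> 'a) set \<Rightarrow> (nat \<times> 'b) set set"
    and A :: "((nat \<times> 'a) set \<times> (nat \<Rightarrow> (nat \<times> nat) set)) set"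
  assumes "chromatic_complex n J"
    and "chromatic_complex n Out"
    and "carrier_map J Out \<Gamma>"
    and "non_expanding J \<Gamma>"
    and "A \<subseteq> J \<times> IIS n"
  shows "solvable_on J Out \<Gamma> A \<longleftrightarrow> (\<exists>P\<in>CP J \<Gamma>. solvable_on J Out (Gamma_P \<Gamma> P) A)"
proof
  assume "solvable_on J Out \<Gamma> A"
  then obtain \<delta> where sol: "solves_on J Out \<Gamma> A \<delta>"
    unfolding solvable_on_def by blast
  have "simplicial_complex Out"
    using assms(2) unfolding chromatic_complex_def by blast
  then obtain P where "P \<in> CP J \<Gamma>" "\<forall>v w. ({v}, w) \<in> A \<longrightarrow> (v, decision \<delta> {v} w (fst v)) \<in> P"
    using exists_CP_extending_solo_decisions[OF assms(1) _ assms(3,5) sol] by blast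
  with sol show "\<exists>P\<in>CP J \<Gamma>. solvable_on J Out (Gamma_P \<Gamma> P) A"
    unfolding solvable_on_def using solves_on_Gamma_P by blast
next
  assume "\<exists>P\<in>CP J \<Gamma>. solvable_on J Out (Gamma_P \<Gamma> P) A"
  then obtain P \<delta> where "P \<in> CP J \<Gamma>" "solves_on J Out (Gamma_P \<Gamma> P) A \<delta>"
    unfolding solvable_on_def by blast
  then have "solves_on J Out \<Gamma> A \<delta>"
    using solves_on_carrier_transfer Gamma_P_subset by blast
  then show "solvable_on J Out \<Gamma> A"
    unfolding solvable_on_def by blast
qed

end
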